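(* For every $n\in\mathbb{N}$, all nonempty chains $c_k,c_s$ over $[n]$, and all formulas $\varphi,\psi$: letting $c_r$ be the chain of symbols common to $c_k$ and $c_s$, $$\vdash_{(n)}\neg_{c_k}\varphi\to_{(n)}\big(\neg_{c_s}\psi\to_{(n)}\neg_{c_s\otimes c_r}(\varphi\to_{(n)}\psi)\big).$$
   Context: Fix $n\in\mathbb{N}$, $n\ge 1$, and write $[n]=\{1,\dots,n\}$. Chains: a chain over $[n]$ is a finite sequence of distinct elements of $[n]$; chains with the same length and the same symbols are identified, so a chain is effectively a subset of $[n]$. $c_k$ denotes a chain with $k$ symbols, $\epsilon$ the empty chain, and $(n)$ the chain consisting of all symbols of $[n]$. For chains $c,d$: the concatenation $c\cdot d$ is the chain of symbols occurring in $c$ or in $d$; the coconcatenation $c\otimes d$ is the chain of symbols occurring in exactly one of $c,d$; $d$ is a subchain of $c$ if every symbol of $d$ is a symbol of $c$. The complementary chain $c'_{n-k}$ of $c_k$ is the chain of the symbols of $[n]$ not occurring in $c_k$. Language of $\mathbf{CPN}_n$: a countable set $P_n$ of propositional letters; constants $\perp_c$ for each chain $c$ over $[n]$ with $1\le |c|\le n-1$, and constants $\perp_{(n)}$ (contradiction) and $\top_{(n)}$ (truth); a unary connective $\neg_c$ for each nonempty chain $c$ over $[n]$ ($\neg_{(n)}$ is the strong negation; the $\neg_c$ with $|c|\le n-1$ are weak negations); a binary connective $\to_{(n)}$. Formulas: propositional letters and constants are formulas; if $\varphi,\psi$ are formulas then so are $\neg_c\varphi$ and $(\varphi\to_{(n)}\psi)$.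 Conventions: $\neg_\epsilon\varphi:=\varphi$, $\perp_\epsilon:=\top_{(n)}$, and $\perp_c$ for $c=(n)$ means $\perp_{(n)}$. Abbreviations: $\varphi\wedge_{(n)}\psi:=\neg_{(n)}(\varphi\to_{(n)}\neg_{(n)}\psi)$, $\varphi\vee_{(n)}\psi:=\neg_{(n)}\varphi\to_{(n)}\psi$, $\varphi\leftrightarrow_{(n)}\psi:=(\varphi\to_{(n)}\psi)\wedge_{(n)}(\psi\to_{(n)}\varphi)$. Axioms of $\mathbf{CPN}_n$, for all formulas $\varphi,\psi,\chi$ and all nonempty chains $c_k,c_r$ over $[n]$: (A1) $\varphi\to_{(n)}(\psi\to_{(n)}\varphi)$; (A2) $(\varphi\to_{(n)}(\psi\to_{(n)}\chi))\to_{(n)}((\varphi\to_{(n)}\psi)\to_{(n)}(\varphi\to_{(n)}\chi))$; (A3) $(\neg_{(n)}\psi\to_{(n)}\neg_{(n)}\varphi)\to_{(n)}((\neg_{(n)}\psi\to_{(n)}\varphi)\to_{(n)}\psi)$; (A4) $\varphi\to_{(n)}(\perp_{c_k}\to_{(n)}\neg_{c_k}\varphi)$; (A5) $\neg_{c_k}\neg_{c_r}\varphi\leftrightarrow_{(n)}\neg_{c_k\otimes c_r}\varphi$; (A6) $\neg_{c_k}\perp_{c_r}\leftrightarrow_{(n)}\perp_{c_k\otimes c_r}$; (A7) $\perp_{c_k}\to_{(n)}\perp_{c_r}$, whenever $c_r$ is a subchain of $c_k$. The only rule of inference is modus ponens (from $\varphi$ and $\varphi\to_{(n)}\psi$ infer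 $\psi$). For a set $\Sigma$ of formulas, $\Sigma\vdash_{(n)}\varphi$ means there is a finite sequence of formulas ending with $\varphi$, each of which is an axiom, a member of $\Sigma$, or obtained from two earlier members by modus ponens; $\vdash_{(n)}\varphi$ means $\emptyset\vdash_{(n)}\varphi$. *)

theory Defs
  imports Main
begin

text \<open>Chains over [n] are identified with subsets of {1..n}.
  Formulas of CPN_n: propositional letters (indexed by nat), constants
  Falsum c (for a nonempty chain c; Falsum {1..n} is the contradiction),
  Top (truth), weak/strong negations Neg c (c nonempty), implication.\<close>

datatype form =
    PVar nat
  | Falsum "nat set"
  | Top
  | Neg "nat set" form
  | Imp form form

definition chain :: "nat \<Rightarrow> nat set \<Rightarrow> bool" where
  "chain n c \<longleftrightarrow> c \<subseteq> {1..n}"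

definition full :: "nat \<Rightarrow> nat set" where
  "full n = {1..n}"

definition cocat :: "nat set \<Rightarrow> nat set \<Rightarrow> nat set" where
  "cocat c d = (c - d) \<union> (d - c)"

fun wf :: "nat \<Rightarrow> form \<Rightarrow> bool" where
  "wf n (PVar p) = True"
| "wf n (Falsum c) = (chain n c \<and> c \<noteq> {})"
| "wf n Top = True"
| "wf n (Neg c \<phi>) = (chain n c \<and> c \<noteq> {} \<and> wf n \<phi>)"
| "wf n (Imp \<phi> \<psi>) = (wf n \<phi> \<and> wf n \<psi>)"

definition neg :: "nat set \<Rightarrow> form \<Rightarrow> form" where
  "neg c \<phi> = (if c = {} then \<phi> else Neg c \<phi>)"

definition bot :: "nat set \<Rightarrow> form" where
  "bot c = (if c = {} then Top else Falsum c)"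

definition conj :: "nat \<Rightarrow> form \<Rightarrow> form \<Rightarrow> form" where
  "conj n \<phi> \<psi> = Neg (full n) (Imp \<phi> (Neg (full n) \<psi>))"

definition disj :: "nat \<Rightarrow> form \<Rightarrow> form \<Rightarrow> form" where
  "disj n \<phi> \<psi> = Imp (Neg (full n) \<phi>) \<psi>"

definition iff :: "nat \<Rightarrow> form \<Rightarrow> form \<Rightarrow> form" where
  "iff n \<phi> \<psi> = conj n (Imp \<phi> \<psi>) (Imp \<psi> \<phi>)"

inductive axiom :: "nat \<Rightarrow> form \<Rightarrow> bool" for n :: nat where
  A1: "\<lbrakk>wf n \<phi>; wf n \<psi>\<rbrakk> \<Longrightarrow> axiom n (Imp \<phi> (Imp \<psi> \<phi>))"
| A2: "\<lbrakk>wf n \<phi>; wf n \<psi>; wf n \<chi>\<rbrakk> \<Longrightarrow>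
     axiom n (Imp (Imp \<phi> (Imp \<psi> \<chi>)) (Imp (Imp \<phi> \<psi>) (Imp \<phi> \<chi>)))"
| A3: "\<lbrakk>wf n \<phi>; wf n \<psi>\<rbrakk> \<Longrightarrow>
     axiom n (Imp (Imp (Neg (full n) \<psi>) (Neg (full n) \<phi>))
                 (Imp (Imp (Neg (full n) \<psi>) \<phi>) \<psi>))"
| A4: "\<lbrakk>wf n \<phi>; chain n ck; ck \<noteq> {}\<rbrakk> \<Longrightarrow>
     axiom n (Imp \<phi> (Imp (Falsum ck) (Neg ck \<phi>)))"
| A5: "\<lbrakk>wf n \<phi>; chain n ck; ck \<noteq> {}; chain n cr; cr \<noteq> {}\<rbrakk> \<Longrightarrow>
     axiom n (iff n (Neg ck (Neg cr \<phi>)) (neg (cocat ck cr) \<phi>))"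
| A6: "\<lbrakk>chain n ck; ck \<noteq> {}; chain n cr; cr \<noteq> {}\<rbrakk> \<Longrightarrow>
     axiom n (iff n (Neg ck (Falsum cr)) (bot (cocat ck cr)))"
| A7: "\<lbrakk>chain n ck; ck \<noteq> {}; cr \<noteq> {}; cr \<subseteq> ck\<rbrakk> \<Longrightarrow>
     axiom n (Imp (Falsum ck) (Falsum cr))"

inductive deriv :: "nat \<Rightarrow> form set \<Rightarrow> form \<Rightarrow> bool" for n :: nat where
  Ax: "axiom n \<phi> \<Longrightarrow> deriv n \<Sigma> \<phi>"
| Hyp: "\<phi> \<in> \<Sigma> \<Longrightarrow> deriv n \<Sigma> \<phi>"
| MP: "\<lbrakk>deriv n \<Sigma> \<phi>; deriv n \<Sigma> (Imp \<phi> \<psi>)\<rbrakk> \<Longrightarrow> deriv n \<Sigma> \<psi>"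

end

theory Submission
  imports Defs
begin

text \<open>The strong negation and implication of \<open>CPN\<^sub>n\<close> satisfy the Hilbert axioms A1--A3, so
  with the deduction theorem every classical tautology built from them is derivable (Kalmar's
  argument), the remaining formulas acting as atoms. The axioms A4--A7 then say that \<open>\<not>\<^sub>c\<close>
  behaves as the identity when \<open>\<bottom>\<^sub>c\<close> holds and as the strong negation otherwise, and relate
  the \<open>\<bottom>\<^sub>c\<close> of different chains. Writing \<open>d = c\<^sub>s \<otimes> c\<^sub>r = c\<^sub>s - c\<^sub>k\<close>, the theorem is
  a tautological consequence of these facts: if \<open>\<bottom>\<^sub>d\<close> fails then \<open>\<bottom>\<^sub>k\<close> holds and \<open>\<bottom>\<^sub>s\<close>
  fails, so the hypotheses give \<open>\<phi>\<close> and \<open>\<not>\<psi>\<close>; if \<open>\<bottom>\<^sub>d\<close> holds then either \<open>\<bottom>\<^sub>s\<close> holds,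
  giving \<open>\<psi>\<close>, or \<open>\<bottom>\<^sub>r\<close> and hence \<open>\<bottom>\<^sub>k\<close> fail, giving \<open>\<not>\<phi>\<close>.\<close>

abbreviation sneg :: "nat \<Rightarrow> form \<Rightarrow> form" where
  "sneg n \<phi> \<equiv> Neg (full n) \<phi>"

lemma chain_full [simp]: "chain n (full n)"
  by (simp add: chain_def full_def)

lemma full_nonempty: "n \<ge> 1 \<Longrightarrow> full n \<noteq> {}"
  by (simp add: full_def)

lemma wf_axiom:
  assumes "n \<ge> 1" and "axiom n \<phi>"
  shows "wf n \<phi>"
  using assms(2)
  by induction
    (use assms(1) in \<open>auto simp: iff_def conj_def neg_def bot_def full_def chain_def cocat_def\<close>)

lemma wf_deriv:
  assumes "deriv n \<Sigma> \<phi>" and "n \<ge> 1" and "\<forall>\<psi>\<in>\<Sigma>. wf n \<psi>"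
  shows "wf n \<phi>"
  using assms by induction (auto simp: wf_axiom)

lemma deriv_mono: "deriv n \<Sigma> \<phi> \<Longrightarrow> \<Sigma> \<subseteq> \<Gamma> \<Longrightarrow> deriv n \<Gamma> \<phi>"
  by (induction rule: deriv.induct) (auto intro: deriv.intros)

lemma deriv_weaken: "deriv n {} \<phi> \<Longrightarrow> deriv n \<Sigma> \<phi>"
  using deriv_mono by blast

lemma deriv_K: "deriv n \<Sigma> \<phi> \<Longrightarrow> wf n \<phi> \<Longrightarrow> wf n \<psi> \<Longrightarrow> deriv n \<Sigma> (Imp \<psi> \<phi>)"
  by (meson axiom.A1 deriv.Ax deriv.MP)

lemma deriv_S:
  "deriv n \<Sigma> (Imp \<phi> (Imp \<psi> \<chi>)) \<Longrightarrow> deriv n \<Sigma> (Imp \<phi> \<psi>) \<Longrightarrow> wf n \<phi> \<Longrightarrow> wf n \<psi> \<Longrightarrow> wf n \<chi>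
    \<Longrightarrow> deriv n \<Sigma> (Imp \<phi> \<chi>)"
  by (meson axiom.A2 deriv.Ax deriv.MP)

lemma deriv_imp_self: "wf n \<phi> \<Longrightarrow> deriv n \<Sigma> (Imp \<phi> \<phi>)"
  by (meson axiom.A1 deriv.Ax deriv_S wf.simps(5))

lemma deduction:
  assumes "deriv n (insert \<phi> \<Sigma>) \<psi>" and "n \<ge> 1" and "\<forall>\<chi>\<in>\<Sigma>. wf n \<chi>" and "wf n \<phi>"
  shows "deriv n \<Sigma> (Imp \<phi> \<psi>)"
  using assms(1)
proof (induction "insert \<phi> \<Sigma>" \<psi> rule: deriv.induct)
  case (Ax \<chi>)
  then show ?case using assms wf_axiom by (meson deriv.Ax deriv_K)
next
  case (Hyp \<chi>)
  then show ?case using assms by (auto intro: deriv.Hyp deriv_K deriv_imp_self)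
next
  case (MP \<chi> \<psi>)
  have "wf n \<chi>" and "wf n \<psi>"
    using wf_deriv[OF MP(1)] wf_deriv[OF MP(3)] assms by auto
  then show ?case using MP assms by (blast intro: deriv_S)
qed

lemma deduction_closed: "deriv n {\<phi>} \<psi> \<Longrightarrow> n \<ge> 1 \<Longrightarrow> wf n \<phi> \<Longrightarrow> deriv n \<Sigma> (Imp \<phi> \<psi>)"
  using deduction[of n \<phi> "{}"] deriv_weaken by auto

lemma deriv_Falsum_subchain:
  "chain n c \<Longrightarrow> c \<noteq> {} \<Longrightarrow> r \<noteq> {} \<Longrightarrow> r \<subseteq> c \<Longrightarrow> deriv n {} (Imp (Falsum c) (Falsum r))"
  by (intro deriv.Ax axiom.A7)

lemma deriv_Neg_Falsum_iff:
  assumes "chain n c" "c \<noteq> {}" "chain n r" "r \<noteq> {}" "cocat c r \<noteq> {}"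
  shows "deriv n {} (iff n (Neg c (Falsum r)) (Falsum (cocat c r)))"
  using deriv.Ax[OF axiom.A6[OF assms(1-4)]] assms(5) by (simp add: bot_def)

lemma deriv_not_Falsum_iff_complement:
  assumes "chain n c" "c \<noteq> {}" "c \<noteq> full n"
  shows "deriv n {} (iff n (sneg n (Falsum c)) (Falsum (full n - c)))"
proof -
  have "cocat (full n) c = full n - c" "full n - c \<noteq> {}" "full n \<noteq> {}"
    using assms by (auto simp: cocat_def chain_def full_def)
  then show ?thesis
    using deriv_Neg_Falsum_iff[of n "full n" c] assms by simp
qed

section \<open>Classical propositional logic\<close>

datatype pform = Atom form | PImp pform pform | PNot pform

primrec peval :: "(form \<Rightarrow> bool) \<Rightarrow> pform \<Rightarrow> bool" where
  "peval v (Atom \<phi>) = v \<phi>"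
| "peval v (PImp p q) = (peval v p \<longrightarrow> peval v q)"
| "peval v (PNot p) = (\<not> peval v p)"

primrec atoms :: "pform \<Rightarrow> form set" where
  "atoms (Atom \<phi>) = {\<phi>}"
| "atoms (PImp p q) = atoms p \<union> atoms q"
| "atoms (PNot p) = atoms p"

lemma finite_atoms: "finite (atoms p)"
  by (induction p) auto

definition PIff :: "pform \<Rightarrow> pform \<Rightarrow> pform" where
  "PIff p q = PNot (PImp (PImp p q) (PNot (PImp q p)))"

lemma peval_PIff [simp]: "peval v (PIff p q) = (peval v p = peval v q)"
  by (auto simp: PIff_def)

lemma atoms_PIff [simp]: "atoms (PIff p q) = atoms p \<union> atoms q"
  by (auto simp: PIff_def)

context
  fixes n :: nat
  assumes n_pos: "n \<ge> 1"
begin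

declare full_nonempty[OF n_pos, simp]

lemma reductio:
  "deriv n \<Sigma> (Imp (sneg n \<psi>) (sneg n \<phi>)) \<Longrightarrow> deriv n \<Sigma> (Imp (sneg n \<psi>) \<phi>) \<Longrightarrow> wf n \<phi> \<Longrightarrow> wf n \<psi>
    \<Longrightarrow> deriv n \<Sigma> \<psi>"
  by (meson axiom.A3 deriv.Ax deriv.MP)

lemma double_neg_elim:
  assumes "wf n \<phi>"
  shows "deriv n \<Sigma> (Imp (sneg n (sneg n \<phi>)) \<phi>)"
proof -
  have "deriv n {sneg n (sneg n \<phi>)} \<phi>"
    by (rule reductio[OF deriv_K[OF deriv.Hyp] deriv_imp_self]) (simp_all add: assms)
  then show ?thesis
    using assms n_pos by (simp add: deduction_closed)
qed

lemma double_neg_intro: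
  assumes "wf n \<phi>"
  shows "deriv n \<Sigma> (Imp \<phi> (sneg n (sneg n \<phi>)))"
proof -
  have "deriv n {\<phi>} (sneg n (sneg n \<phi>))"
    by (rule reductio[OF double_neg_elim deriv_K[OF deriv.Hyp]]) (simp_all add: assms)
  then show ?thesis
    using assms n_pos by (simp add: deduction_closed)
qed

lemma ex_falso:
  assumes "wf n \<phi>" and "wf n \<psi>"
  shows "deriv n \<Sigma> (Imp (sneg n \<phi>) (Imp \<phi> \<psi>))"
proof -
  have "deriv n {\<phi>, sneg n \<phi>} \<psi>"
    by (rule reductio[of _ \<psi> \<phi>, OF deriv_K[OF deriv.Hyp] deriv_K[OF deriv.Hyp]]) (simp_all add: assms)
  then show ?thesis
    using assms n_pos by (simp add: deduction deduction_closed)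
qed

lemma contrapos:
  assumes "wf n \<phi>" and "wf n \<psi>"
  shows "deriv n \<Sigma> (Imp (Imp \<phi> \<psi>) (Imp (sneg n \<psi>) (sneg n \<phi>)))"
proof -
  let ?\<Gamma> = "{sneg n \<psi>, Imp \<phi> \<psi>}"
  have "deriv n (insert (sneg n (sneg n \<phi>)) ?\<Gamma>) \<psi>"
    by (rule deriv.MP[OF deriv.MP[OF deriv.Hyp double_neg_elim[of \<phi>]] deriv.Hyp]) (simp_all add: assms)
  then have "deriv n ?\<Gamma> (Imp (sneg n (sneg n \<phi>)) \<psi>)"
    using assms n_pos by (simp add: deduction)
  with deriv_K[OF deriv.Hyp] have "deriv n ?\<Gamma> (sneg n \<phi>)"
    by (rule reductio) (simp_all add: assms)
  then show ?thesis
    using assms n_pos by (simp add: deduction deduction_closed)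
qed

lemma imp_sneg:
  assumes "wf n \<phi>" and "wf n \<psi>"
  shows "deriv n \<Sigma> (Imp \<phi> (Imp (sneg n \<psi>) (sneg n (Imp \<phi> \<psi>))))"
proof -
  let ?\<Gamma> = "{sneg n \<psi>, \<phi>}"
  have "deriv n (insert (sneg n (sneg n (Imp \<phi> \<psi>))) ?\<Gamma>) \<psi>"
    by (rule deriv.MP[OF deriv.Hyp[where \<phi> = \<phi>]
          deriv.MP[OF deriv.Hyp double_neg_elim[of "Imp \<phi> \<psi>"]]])
      (simp_all add: assms)
  then have "deriv n ?\<Gamma> (Imp (sneg n (sneg n (Imp \<phi> \<psi>))) \<psi>)"
    using assms n_pos by (simp add: deduction)
  with deriv_K[OF deriv.Hyp] have "deriv n ?\<Gamma> (sneg n (Imp \<phi> \<psi>))"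
    by (rule reductio) (simp_all add: assms)
  then show ?thesis
    using assms n_pos by (simp add: deduction deduction_closed)
qed

lemma case_split:
  assumes "wf n \<phi>" and "wf n \<psi>"
  shows "deriv n \<Sigma> (Imp (Imp \<phi> \<psi>) (Imp (Imp (sneg n \<phi>) \<psi>) \<psi>))"
proof -
  let ?\<Gamma> = "{Imp (sneg n \<phi>) \<psi>, Imp \<phi> \<psi>}"
  let ?\<Delta> = "insert (sneg n \<psi>) ?\<Gamma>"
  have "deriv n ?\<Delta> (sneg n \<psi>)"
    by (simp add: deriv.Hyp)
  moreover have "deriv n ?\<Delta> (Imp (sneg n \<psi>) (sneg n (sneg n \<phi>)))"
    by (rule deriv.MP[OF deriv.Hyp contrapos]) (simp_all add: assms)
  ultimately have "deriv n ?\<Delta> (sneg n (sneg n \<phi>))"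
    by (rule deriv.MP)
  then have "deriv n ?\<Delta> \<phi>"
    by (rule deriv.MP[OF _ double_neg_elim]) (simp add: assms)
  then have "deriv n ?\<Gamma> (Imp (sneg n \<psi>) \<phi>)"
    using assms n_pos by (simp add: deduction)
  with deriv.MP[OF deriv.Hyp contrapos] have "deriv n ?\<Gamma> \<psi>"
    by (rule reductio) (simp_all add: assms)
  then show ?thesis
    using assms n_pos by (simp add: deduction deduction_closed)
qed

primrec embed :: "pform \<Rightarrow> form" where
  "embed (Atom \<phi>) = \<phi>"
| "embed (PImp p q) = Imp (embed p) (embed q)"
| "embed (PNot p) = sneg n (embed p)"

lemma embed_PIff [simp]: "embed (PIff p q) = iff n (embed p) (embed q)"
  by (simp add: PIff_def iff_def conj_def)

definition signed :: "bool \<Rightarrow> form \<Rightarrow> form" where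
  "signed b \<phi> = (if b then \<phi> else sneg n \<phi>)"

lemma wf_embed: "\<forall>\<phi>\<in>atoms p. wf n \<phi> \<Longrightarrow> wf n (embed p)"
  by (induction p) auto

lemma kalmar:
  assumes "\<forall>\<phi>\<in>atoms p. wf n \<phi>" and "\<forall>\<phi>\<in>atoms p. signed (v \<phi>) \<phi> \<in> \<Sigma>"
  shows "deriv n \<Sigma> (signed (peval v p) (embed p))"
  using assms
proof (induction p)
  case (Atom \<phi>)
  then show ?case by (simp add: deriv.Hyp)
next
  case (PNot p)
  then have "deriv n \<Sigma> (signed (peval v p) (embed p))" and "wf n (embed p)"
    by (simp_all add: wf_embed)
  then show ?case
    by (cases "peval v p") (auto simp: signed_def intro: deriv.MP[OF _ double_neg_intro])
next
  case (PImp p q)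
  then have p: "deriv n \<Sigma> (signed (peval v p) (embed p))" and "wf n (embed p)"
    and q: "deriv n \<Sigma> (signed (peval v q) (embed q))" and "wf n (embed q)"
    by (simp_all add: wf_embed)
  consider "peval v q" | "\<not> peval v p" | "peval v p" "\<not> peval v q"
    by blast
  then show ?case
  proof cases
    case 1
    with q show ?thesis
      by (simp add: signed_def deriv_K \<open>wf n (embed p)\<close> \<open>wf n (embed q)\<close>)
  next
    case 2
    with p show ?thesis
      by (auto simp: signed_def \<open>wf n (embed p)\<close> \<open>wf n (embed q)\<close>
          intro: deriv.MP[OF _ ex_falso])
  next
    case 3
    with p q show ?thesis
      by (auto simp: signed_def \<open>wf n (embed p)\<close> \<open>wf n (embed q)\<close>
          intro: deriv.MP[OF _ deriv.MP[OF _ imp_sneg]])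
  qed
qed

lemma tautology_from_signed_atoms:
  assumes "finite A" and "A \<subseteq> atoms p" and "\<forall>\<phi>\<in>atoms p. wf n \<phi>" and "\<forall>v. peval v p"
  shows "deriv n ((\<lambda>\<phi>. signed (v \<phi>) \<phi>) ` (atoms p - A)) (embed p)"
  using assms(1,2)
proof (induction A arbitrary: v rule: finite_induct)
  case empty
  show ?case
    using kalmar[OF assms(3), of v] assms(4) by (simp add: signed_def)
next
  case (insert \<chi> A)
  let ?\<Gamma> = "(\<lambda>\<phi>. signed (v \<phi>) \<phi>) ` (atoms p - insert \<chi> A)"
  have \<chi>: "\<chi> \<in> atoms p" "\<chi> \<notin> A" and "wf n \<chi>"
    using insert assms(3) by auto
  have "wf n (embed p)"
    using assms(3) by (rule wf_embed)
  have \<Gamma>: "\<forall>\<phi>\<in>?\<Gamma>. wf n \<phi>"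
    using assms(3) by (auto simp: signed_def)
  have split: "atoms p - A = insert \<chi> (atoms p - insert \<chi> A)"
    using \<chi> by auto
  have "deriv n (insert (signed b \<chi>) ?\<Gamma>) (embed p)" for b
  proof -
    have "(\<lambda>\<phi>. signed ((v(\<chi> := b)) \<phi>) \<phi>) ` (atoms p - A) = insert (signed b \<chi>) ?\<Gamma>"
      unfolding split using \<chi> by (auto simp: image_iff)
    then show ?thesis
      using insert.IH[of "v(\<chi> := b)"] insert.prems by auto
  qed
  from this[of True] this[of False]
  have "deriv n (insert \<chi> ?\<Gamma>) (embed p)" and "deriv n (insert (sneg n \<chi>) ?\<Gamma>) (embed p)"
    by (simp_all only: signed_def if_True if_False)
  then have "deriv n ?\<Gamma> (Imp \<chi> (embed p))" and "deriv n ?\<Gamma> (Imp (sneg n \<chi>) (embed p))"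
    using \<Gamma> \<open>wf n \<chi>\<close> n_pos by (simp_all add: deduction)
  with case_split[OF \<open>wf n \<chi>\<close> \<open>wf n (embed p)\<close>] show ?case
    by (meson deriv.MP)
qed

lemma deriv_tautology:
  assumes "\<forall>\<phi>\<in>atoms p. wf n \<phi>" and "\<forall>v. peval v p"
  shows "deriv n \<Sigma> (embed p)"
  using tautology_from_signed_atoms[OF finite_atoms order_refl assms] deriv_weaken by simp

lemma deriv_tautological_consequence:
  assumes "\<forall>\<phi>\<in>atoms q \<union> (\<Union>p\<in>set ps. atoms p). wf n \<phi>"
    and "\<And>v. \<forall>p\<in>set ps. peval v p \<Longrightarrow> peval v q"
    and "\<forall>p\<in>set ps. deriv n {} (embed p)"
  shows "deriv n {} (embed q)"
proof -
  have "atoms (foldr PImp ps q) = atoms q \<union> (\<Union>p\<in>set ps. atoms p)"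
    and "peval v (foldr PImp ps q) \<longleftrightarrow> (\<forall>p\<in>set ps. peval v p) \<longrightarrow> peval v q" for v
    by (induction ps) auto
  then have "deriv n {} (embed (foldr PImp ps q))"
    using assms(1,2) by (simp add: deriv_tautology)
  then show ?thesis
    using assms(3) by (induction ps) (auto intro: deriv.MP)
qed

section \<open>Weak negations\<close>

definition neg_cases :: "nat set \<Rightarrow> pform \<Rightarrow> pform" where
  "neg_cases c p =
    (let N = Atom (Neg c (embed p)); F = Atom (Falsum c)
     in PNot (PImp (PImp F (PIff N p)) (PNot (PImp (PNot F) (PIff N (PNot p))))))"

lemma peval_neg_cases [simp]:
  "peval v (neg_cases c p) \<longleftrightarrow>
    v (Neg c (embed p)) = (if v (Falsum c) then peval v p else \<not> peval v p)"
  by (auto simp: neg_cases_def Let_def)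

lemma atoms_neg_cases [simp]:
  "atoms (neg_cases c p) = {Neg c (embed p), Falsum c} \<union> atoms p"
  by (auto simp: neg_cases_def Let_def)

lemma deriv_Falsum_Neg_iff:
  assumes c: "chain n c" "c \<noteq> {}" and "wf n \<phi>"
  shows "deriv n {} (Imp (Falsum c) (iff n (Neg c \<phi>) \<phi>))"
proof -
  have "deriv n {} (iff n (Neg c (Neg c \<phi>)) \<phi>)"
    using deriv.Ax[OF axiom.A5[of n \<phi> c c]] assms by (simp add: neg_def cocat_def)
  moreover have "deriv n {} (Imp \<chi> (Imp (Falsum c) (Neg c \<chi>)))" if "wf n \<chi>" for \<chi>
    using c that by (intro deriv.Ax axiom.A4)
  ultimately show ?thesis
    using deriv_tautological_consequence[of
        "PImp (Atom (Falsum c)) (PIff (Atom (Neg c \<phi>)) (Atom \<phi>))"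
        "[PImp (Atom \<phi>) (PImp (Atom (Falsum c)) (Atom (Neg c \<phi>))),
          PImp (Atom (Neg c \<phi>)) (PImp (Atom (Falsum c)) (Atom (Neg c (Neg c \<phi>)))),
          PIff (Atom (Neg c (Neg c \<phi>))) (Atom \<phi>)]"] assms
    by auto
qed

lemma deriv_not_Falsum_Neg_iff:
  assumes c: "chain n c" "c \<noteq> {}" and "wf n \<phi>"
  shows "deriv n {} (Imp (sneg n (Falsum c)) (iff n (Neg c \<phi>) (sneg n \<phi>)))"
proof (cases "c = full n")
  case True
  then show ?thesis
    using deriv_tautology[of "PImp (PNot (Atom (Falsum c))) (PIff (PNot (Atom \<phi>)) (PNot (Atom \<phi>)))"]
      assms by auto
next
  case False
  let ?c' = "full n - c"
  have c': "cocat (full n) c = ?c'" "chain n ?c'" "?c' \<noteq> {}"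
    using c False by (auto simp: cocat_def chain_def full_def)
  have "deriv n {} (iff n (sneg n (Neg c \<phi>)) (Neg ?c' \<phi>))"
    using deriv.Ax[OF axiom.A5[of n \<phi> "full n" c]] assms c' by (simp add: neg_def)
  then show ?thesis
    using deriv_tautological_consequence[of
        "PImp (PNot (Atom (Falsum c))) (PIff (Atom (Neg c \<phi>)) (PNot (Atom \<phi>)))"
        "[PIff (PNot (Atom (Falsum c))) (Atom (Falsum ?c')),
          PImp (Atom (Falsum ?c')) (PIff (Atom (Neg ?c' \<phi>)) (Atom \<phi>)),
          PIff (PNot (Atom (Neg c \<phi>))) (Atom (Neg ?c' \<phi>))]"]
      deriv_not_Falsum_iff_complement[OF c False] deriv_Falsum_Neg_iff[OF c'(2,3)] assms c'
    by auto
qed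

lemma deriv_neg_cases:
  assumes "chain n c" "c \<noteq> {}" and "\<forall>\<phi>\<in>atoms p. wf n \<phi>"
  shows "deriv n {} (embed (neg_cases c p))"
  using deriv_tautological_consequence[of "neg_cases c p"
      "[PImp (Atom (Falsum c)) (PIff (Atom (Neg c (embed p))) p),
        PImp (PNot (Atom (Falsum c))) (PIff (Atom (Neg c (embed p))) (PNot p))]"]
    deriv_Falsum_Neg_iff[OF assms(1,2)] deriv_not_Falsum_Neg_iff[OF assms(1,2)]
    assms wf_embed
  by auto

lemma deriv_not_Falsum_disjoint:
  assumes "chain n c" "c \<noteq> {}" "chain n d" "d \<noteq> {}" "c \<inter> d = {}"
  shows "deriv n {} (Imp (sneg n (Falsum c)) (Falsum d))"
proof -
  have sub: "d \<subseteq> full n - c"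
    using assms by (auto simp: chain_def full_def)
  then have "c \<noteq> full n" "full n - c \<noteq> {}" "chain n (full n - c)"
    using assms(4) by (auto simp: chain_def full_def)
  then show ?thesis
    using deriv_tautological_consequence[of "PImp (PNot (Atom (Falsum c))) (Atom (Falsum d))"
        "[PIff (PNot (Atom (Falsum c))) (Atom (Falsum (full n - c))),
          PImp (Atom (Falsum (full n - c))) (Atom (Falsum d))]"]
      deriv_not_Falsum_iff_complement[of n c] deriv_Falsum_subchain[of n "full n - c" d] assms sub
    by auto
qed

lemma deriv_Neg_imp_disjoint:
  assumes K: "chain n K" "K \<noteq> {}" and S: "chain n S" "S \<noteq> {}" and "K \<inter> S = {}"
    and "wf n \<phi>" "wf n \<psi>"
  shows "deriv n {} (Imp (Neg K \<phi>) (Imp (Neg S \<psi>) (Neg S (Imp \<phi> \<psi>))))"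
  using deriv_tautological_consequence[of
      "PImp (Atom (Neg K \<phi>)) (PImp (Atom (Neg S \<psi>)) (Atom (Neg S (Imp \<phi> \<psi>))))"
      "[neg_cases K (Atom \<phi>), neg_cases S (Atom \<psi>), neg_cases S (PImp (Atom \<phi>) (Atom \<psi>)),
        PImp (PNot (Atom (Falsum K))) (Atom (Falsum S))]"]
    deriv_neg_cases[OF K] deriv_neg_cases[OF S] deriv_not_Falsum_disjoint[OF K S] assms
  by auto

lemma deriv_Neg_imp_subchain:
  assumes K: "chain n K" "K \<noteq> {}" and S: "chain n S" "S \<noteq> {}" and "S \<subseteq> K"
    and "wf n \<phi>" "wf n \<psi>"
  shows "deriv n {} (Imp (Neg K \<phi>) (Imp (Neg S \<psi>) (Imp \<phi> \<psi>)))"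
  using deriv_tautological_consequence[of
      "PImp (Atom (Neg K \<phi>)) (PImp (Atom (Neg S \<psi>)) (PImp (Atom \<phi>) (Atom \<psi>)))"
      "[neg_cases K (Atom \<phi>), neg_cases S (Atom \<psi>), PImp (Atom (Falsum K)) (Atom (Falsum S))]"]
    deriv_neg_cases[OF K] deriv_neg_cases[OF S] deriv_Falsum_subchain[OF K S(2)] assms
  by auto

lemma deriv_Neg_imp_overlap:
  assumes K: "chain n K" "K \<noteq> {}" and S: "chain n S" "S \<noteq> {}"
    and r: "K \<inter> S \<noteq> {}" and d: "S - K \<noteq> {}" and "wf n \<phi>" "wf n \<psi>"
  shows "deriv n {} (Imp (Neg K \<phi>) (Imp (Neg S \<psi>) (Neg (S - K) (Imp \<phi> \<psi>))))"
proof -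
  have chains: "chain n (K \<inter> S)" "chain n (S - K)" and cocat: "cocat S (K \<inter> S) = S - K"
    using K S by (auto simp: chain_def cocat_def)
  let ?hyps = "[neg_cases K (Atom \<phi>), neg_cases S (Atom \<psi>),
    neg_cases (S - K) (PImp (Atom \<phi>) (Atom \<psi>)), neg_cases S (Atom (Falsum (K \<inter> S))),
    PImp (Atom (Falsum K)) (Atom (Falsum (K \<inter> S))),
    PIff (Atom (Neg S (Falsum (K \<inter> S)))) (Atom (Falsum (S - K))),
    PImp (PNot (Atom (Falsum K))) (Atom (Falsum (S - K)))]"
  have "deriv n {} (embed
    (PImp (Atom (Neg K \<phi>)) (PImp (Atom (Neg S \<psi>)) (Atom (Neg (S - K) (Imp \<phi> \<psi>))))))"
  proof (rule deriv_tautological_consequence[where ps = ?hyps])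
    show "\<forall>p\<in>set ?hyps. deriv n {} (embed p)"
      using deriv_neg_cases[OF K] deriv_neg_cases[OF S] deriv_neg_cases[OF chains(2) d]
        deriv_Falsum_subchain[OF K r] deriv_Neg_Falsum_iff[OF S chains(1) r]
        deriv_not_Falsum_disjoint[OF K chains(2) d] assms chains cocat
      by auto
  qed (use assms chains in auto)
  then show ?thesis
    by simp
qed

end

theorem mainTheorem7:
  fixes n :: nat and ck cs :: "nat set" and \<phi> \<psi> :: form
  assumes "n \<ge> 1"
    and "chain n ck" and "ck \<noteq> {}"
    and "chain n cs" and "cs \<noteq> {}"
    and "wf n \<phi>" and "wf n \<psi>"
  shows "deriv n {} (Imp (neg ck \<phi>)
           (Imp (neg cs \<psi>) (neg (cocat cs (ck \<inter> cs)) (Imp \<phi> \<psi>))))"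
proof -
  have "cocat cs (ck \<inter> cs) = cs - ck"
    by (auto simp: cocat_def)
  moreover consider "ck \<inter> cs = {}" | "cs - ck = {}" | "ck \<inter> cs \<noteq> {}" "cs - ck \<noteq> {}"
    by blast
  then have "deriv n {} (Imp (neg ck \<phi>) (Imp (neg cs \<psi>) (neg (cs - ck) (Imp \<phi> \<psi>))))"
  proof cases
    case 1
    then have "cs - ck = cs"
      by blast
    then show ?thesis
      using deriv_Neg_imp_disjoint[OF assms(1-5) 1 assms(6,7)] assms(3,5) by (simp add: neg_def)
  next
    case 2
    then show ?thesis
      using deriv_Neg_imp_subchain[OF assms(1-5) _ assms(6,7)] assms(3,5) by (simp add: neg_def)
  next
    case 3
    then show ?thesis
      using deriv_Neg_imp_overlap[OF assms(1-5) 3 assms(6,7)] assms(3,5) by (simp add: neg_def)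
  qed
  ultimately show ?thesis
    by simp
qed

end
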